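(* Let $A\ge 1$. For $0\le b\le a\le A$ define $$e(a,b)=\frac{2b(a-b)}{1+(a-b)^2}.$$ Then the maximum of $e$ over $0\le b\le a\le A$ is attained at $$a=A,\qquad b=\frac{1+A^2-\sqrt{1+A^2}}{A},$$ and the maximal value is $$e\!\left(A,\frac{1+A^2-\sqrt{1+A^2}}{A}\right)=\sqrt{1+A^2}-1.$$
   Context: Geometric meaning: the page is the rectangle $[0,1]\times[0,A]$ (width $1$, height $A\ge1$) with its top edge fixed. A crease through $(0,a)$ on the left edge and $(1,b)$ on the right edge, with $a\ge b$, reflects the lower trapezoid $(0,0),(1,0),(1,b),(0,a)$ across it. The reflected bottom-right corner then has $x$-coordinate $1+e(a,b)$. *)

theory Defs
  imports Complex_Main
begin

definition fold_e :: "real \<Rightarrow> real \<Rightarrow> real" where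
  "fold_e a b = 2 * b * (a - b) / (1 + (a - b)^2)"

end

theory Submission
  imports Defs
begin

text \<open>
  Only the width \<open>d = a - b\<close> of the folded strip matters once \<open>b\<close> is pushed to its
  largest admissible value \<open>A - d\<close>; this reduces the problem to maximising
  \<open>2 (A - d) d / (1 + d\<^sup>2)\<close> over \<open>d\<close>. With \<open>s = \<surd>(1 + A\<^sup>2)\<close> the gap
  \<open>(s - 1)(1 + d\<^sup>2) - 2 (A - d) d\<close> is the perfect square \<open>(s + 1)(d - A/(s + 1))\<^sup>2\<close>,
  so the maximum \<open>s - 1\<close> is attained exactly at \<open>d = A/(s + 1)\<close>, i.e. at
  \<open>b = A - A/(s + 1) = (1 + A\<^sup>2 - s)/A\<close>.
\<close>

lemma fold_e_le_fold_e_top: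
  assumes "b \<le> a" "a \<le> A"
  shows "fold_e a b \<le> fold_e A (A - (a - b))"
proof -
  have "2 * b * (a - b) \<le> 2 * (A - (a - b)) * (a - b)"
    using assms by (intro mult_right_mono) auto
  moreover have "0 < 1 + (a - b)^2"
    by (simp add: add_pos_nonneg)
  ultimately show ?thesis
    unfolding fold_e_def by (simp add: divide_right_mono)
qed

lemma fold_e_top_eq:
  fixes A d :: real
  defines "s \<equiv> sqrt (1 + A^2)"
  shows "fold_e A (A - d) = (s - 1) - (s + 1) * (d - A / (s + 1))^2 / (1 + d^2)"
proof -
  have s2: "s^2 = 1 + A^2" and s_pos: "0 < s + 1"
    unfolding s_def by (simp_all add: add_pos_nonneg)
  have "(s + 1) * ((s - 1) * (1 + d^2) - 2 * (A - d) * d) = ((s + 1) * d - A)^2"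
    using s2 by (simp add: algebra_simps power2_eq_square)
  also have "(s + 1) * d - A = (s + 1) * (d - A / (s + 1))"
    using s_pos by (simp add: field_simps)
  also have "((s + 1) * (d - A / (s + 1)))^2 = (s + 1)^2 * (d - A / (s + 1))^2"
    by (rule power_mult_distrib)
  finally have "(s + 1) * ((s - 1) * (1 + d^2) - 2 * (A - d) * d)
      = (s + 1) * ((s + 1) * (d - A / (s + 1))^2)"
    by (simp add: power2_eq_square)
  then have gap: "2 * (A - d) * d = (s - 1) * (1 + d^2) - (s + 1) * (d - A / (s + 1))^2"
    using s_pos by simp
  have "0 < 1 + d^2"
    by (simp add: add_pos_nonneg)
  have "fold_e A (A - d) = 2 * (A - d) * d / (1 + d^2)"
    unfolding fold_e_def by simp
  also have "\<dots> = ((s - 1) * (1 + d^2) - (s + 1) * (d - A / (s + 1))^2) / (1 + d^2)"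
    unfolding gap ..
  also have "\<dots> = (s - 1) - (s + 1) * (d - A / (s + 1))^2 / (1 + d^2)"
    using \<open>0 < 1 + d^2\<close> by (simp add: diff_divide_distrib)
  finally show ?thesis .
qed

lemma fold_e_top_le: "fold_e A (A - d) \<le> sqrt (1 + A^2) - 1"
  unfolding fold_e_top_eq by (simp add: add_pos_nonneg)

lemma fold_e_top_at_optimum:
  fixes A :: real
  defines "c \<equiv> A / (sqrt (1 + A^2) + 1)"
  shows "fold_e A (A - c) = sqrt (1 + A^2) - 1"
  unfolding fold_e_top_eq c_def by simp

lemma optimal_b_eq_A_minus_width: "(1 + A^2 - sqrt (1 + A^2)) / A = A - A / (sqrt (1 + A^2) + 1)"
proof -
  define s where "s = sqrt (1 + A^2)"
  have "A * A = (s - 1) * (s + 1)" and "0 < s + 1"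
    unfolding s_def by (simp_all add: add_pos_nonneg algebra_simps flip: power2_eq_square)
  then have "A / (s + 1) = (s - 1) / A" if "A \<noteq> 0"
    using that by (simp add: field_simps)
  then show ?thesis
    unfolding s_def[symmetric] by (cases "A = 0") (simp_all add: s_def field_simps power2_eq_square)
qed

lemma optimal_width_bounds:
  fixes A :: real
  assumes "0 \<le> A"
  shows "0 \<le> A / (sqrt (1 + A^2) + 1)" and "A / (sqrt (1 + A^2) + 1) \<le> A"
  using assms by (simp_all add: divide_le_eq add_pos_nonneg mult_le_cancel_left1)

theorem mainTheorem5:
  fixes A :: real
  assumes "A \<ge> 1"
  defines "bstar \<equiv> (1 + A^2 - sqrt (1 + A^2)) / A"
  shows "0 \<le> bstar \<and> bstar \<le> A
     \<and> (\<forall>a b. 0 \<le> b \<and> b \<le> a \<and> a \<le> A \<longrightarrow> fold_e a b \<le> fold_e A bstar)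
     \<and> fold_e A bstar = sqrt (1 + A^2) - 1"
proof -
  define c where "c = A / (sqrt (1 + A^2) + 1)"
  have bstar: "bstar = A - c"
    unfolding bstar_def c_def by (rule optimal_b_eq_A_minus_width)
  have "0 \<le> c" "c \<le> A"
    unfolding c_def using assms optimal_width_bounds by auto
  moreover have optimum: "fold_e A bstar = sqrt (1 + A^2) - 1"
    unfolding bstar c_def by (rule fold_e_top_at_optimum)
  moreover have "fold_e a b \<le> fold_e A bstar" if "b \<le> a" "a \<le> A" for a b
    using fold_e_le_fold_e_top[OF that] fold_e_top_le optimum by (metis order_trans)
  ultimately show ?thesis
    unfolding bstar by auto
qed

end
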